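(* For every $f\in\mathbb Z[x_1,\dots,x_n]$, $$\langle f\rangle_n=\mathsf T_{1,2}(\mathsf T_{1,3}+\mathsf T_{2,3})\cdots(\mathsf T_{1,n}+\cdots+\mathsf T_{n-1,n})f.$$ In particular, if $f$ is homogeneous of degree $n-1$, then $\langle f\rangle_n=T_1(T_1+T_2)\cdots(T_1+\cdots+T_{n-1})f$.
   Context: Divided symmetrization: $\langle f\rangle_n=\sum_{\sigma\in S_n}\frac{f(x_{\sigma(1)},\dots,x_{\sigma(n)})}{(x_{\sigma(1)}-x_{\sigma(2)})\cdots(x_{\sigma(n-1)}-x_{\sigma(n)})}$. For $1\le i\le m\le n$, $\mathsf R_{i,m}$ acts on $\mathbb Z[x_1,\dots,x_n]$ by $f\mapsto f(x_1,\dots,x_{i-1},x_m,x_i,\dots,x_{m-1},x_{m+1},\dots,x_n)$, and for $1\le i\le m-1$, $\mathsf T_{i,m}f=\frac{\mathsf R_{i+1,m}f-\mathsf R_{i,m}f}{x_i-x_m}$ (a polynomial); composition is applied right to left. $R_if=f(x_1,\dots,x_{i-1},0,x_i,\dots)$, $T_if=\frac1{x_i}(R_{i+1}f-R_if)$. *)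

theory Defs
  imports "HOL-Library.Poly_Mapping" "HOL-Combinatorics.Permutations" Complex_Main
begin

text \<open>Integer multivariate polynomials in variables x_1, x_2, ...: a monomial is a
finitely supported exponent map nat \<Rightarrow>0 nat, a polynomial a finitely supported
coefficient map on monomials (multiplication = convolution).\<close>

type_synonym zpoly = "(nat \<Rightarrow>\<^sub>0 nat) \<Rightarrow>\<^sub>0 int"

definition Var :: "nat \<Rightarrow> zpoly" where
  "Var j = Poly_Mapping.single (Poly_Mapping.single j 1) 1"

definition vars :: "zpoly \<Rightarrow> nat set" where
  "vars p = (\<Union>(m::nat \<Rightarrow>\<^sub>0 nat)\<in>Poly_Mapping.keys p. Poly_Mapping.keys m)"

definition peval :: "(nat \<Rightarrow> 'a::comm_ring_1) \<Rightarrow> zpoly \<Rightarrow> 'a" where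
  "peval s p = (\<Sum>m\<in>Poly_Mapping.keys p. of_int (Poly_Mapping.lookup p m) * (\<Prod>v\<in>Poly_Mapping.keys m. s v ^ Poly_Mapping.lookup m v))"

definition homogeneous :: "nat \<Rightarrow> zpoly \<Rightarrow> bool" where
  "homogeneous d p \<longleftrightarrow> (\<forall>m\<in>Poly_Mapping.keys p. (\<Sum>v\<in>Poly_Mapping.keys m. Poly_Mapping.lookup m v) = d)"

definition exdiv :: "zpoly \<Rightarrow> zpoly \<Rightarrow> zpoly" where
  "exdiv g h = (THE q. g = h * q)"

text \<open>R_{i,m} f = f(x_1,...,x_{i-1},x_m,x_i,...,x_{m-1},x_{m+1},...): the k-th argument
slot receives x_{sigma k}.\<close>
definition Rim :: "nat \<Rightarrow> nat \<Rightarrow> zpoly \<Rightarrow> zpoly" where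
  "Rim i m f = peval (\<lambda>k. Var (if k < i then k else if k = i then m
                                 else if k \<le> m then k - 1 else k)) f"

definition Tim :: "nat \<Rightarrow> nat \<Rightarrow> zpoly \<Rightarrow> zpoly" where
  "Tim i m f = exdiv (Rim (i+1) m f - Rim i m f) (Var i - Var m)"

definition Ri :: "nat \<Rightarrow> zpoly \<Rightarrow> zpoly" where
  "Ri i f = peval (\<lambda>k. if k < i then Var k else if k = i then 0 else Var (k - 1)) f"

definition Ti :: "nat \<Rightarrow> zpoly \<Rightarrow> zpoly" where
  "Ti i f = exdiv (Ri (i+1) f - Ri i f) (Var i)"

definition Tsum :: "nat \<Rightarrow> zpoly \<Rightarrow> zpoly" where
  "Tsum m f = (\<Sum>i=1..<m. Tim i m f)"

definition Tsum0 :: "nat \<Rightarrow> zpoly \<Rightarrow> zpoly" where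
  "Tsum0 k f = (\<Sum>i=1..k. Ti i f)"

text \<open>The divided symmetrization <f>_n, as a rational function evaluated at a point
x with pairwise distinct coordinates x_1,...,x_n.\<close>
definition dsym :: "nat \<Rightarrow> zpoly \<Rightarrow> (nat \<Rightarrow> real) \<Rightarrow> real" where
  "dsym n f x = (\<Sum>\<sigma>\<in>{\<sigma>. \<sigma> permutes {1..n}}.
      peval (\<lambda>k. x (\<sigma> k)) f / (\<Prod>j\<in>{1..<n}. (x (\<sigma> j) - x (\<sigma> (j+1)))))"

end

theory Submission
  imports Defs
begin

text \<open>
Put the last variable x_n in each possible position of a fixed arrangement of x_1, ..., x_(n-1).
By partial fractions the reciprocals of the resulting denominators telescope, and summation by
parts turns the sum over all positions into the divided-difference operator
T_(1,n) + ... + T_(n-1,n) applied to the numerator, divided by the denominator of the shorter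
arrangement. Summing over all arrangements gives <f>_n = <(T_(1,n) + ... + T_(n-1,n)) f>_(n-1),
and the first identity follows by induction on n.

For f homogeneous of degree n-1 the iterated operator produces a constant: its value at every
point with distinct coordinates is the scale-invariant <f>_n, so by continuity it equals its value
at 0 everywhere. Evaluating at x_2 = ... = x_n = 0 instead, the substitution x_m := 0 intertwines
T_(1,m) + ... + T_(m-1,m) with T_1 + ... + T_(m-1) on polynomials in x_1, ..., x_m and commutes with
the operators of smaller index, which yields the second identity.
\<close>

definition eval_monomial :: "(nat \<Rightarrow> 'a::comm_ring_1) \<Rightarrow> (nat \<Rightarrow>\<^sub>0 nat) \<Rightarrow> 'a" where
  "eval_monomial s a = (\<Prod>v\<in>Poly_Mapping.keys a. s v ^ Poly_Mapping.lookup a v)"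

lemma peval_eq_sum_eval_monomial:
  "peval s p = (\<Sum>m\<in>Poly_Mapping.keys p. of_int (Poly_Mapping.lookup p m) * eval_monomial s m)"
  by (simp add: peval_def eval_monomial_def)

lemma eval_monomial_superset:
  assumes "finite S" "Poly_Mapping.keys a \<subseteq> S"
  shows "eval_monomial s a = (\<Prod>v\<in>S. s v ^ Poly_Mapping.lookup a v)"
  unfolding eval_monomial_def
  by (rule prod.mono_neutral_left) (use assms in \<open>auto simp: in_keys_iff\<close>)

lemma eval_monomial_add: "eval_monomial s (a + b) = eval_monomial s a * eval_monomial s b"
proof -
  let ?S = "Poly_Mapping.keys a \<union> Poly_Mapping.keys b"
  have "eval_monomial s (a + b) = (\<Prod>v\<in>?S. s v ^ Poly_Mapping.lookup (a + b) v)"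
    by (rule eval_monomial_superset) (auto dest: set_mp[OF keys_add])
  also have "\<dots> = (\<Prod>v\<in>?S. s v ^ Poly_Mapping.lookup a v) * (\<Prod>v\<in>?S. s v ^ Poly_Mapping.lookup b v)"
    by (simp add: lookup_add power_add prod.distrib)
  also have "\<dots> = eval_monomial s a * eval_monomial s b"
    using eval_monomial_superset[of ?S a s] eval_monomial_superset[of ?S b s] by simp
  finally show ?thesis .
qed

lemma eval_monomial_zero [simp]: "eval_monomial s 0 = 1"
  by (simp add: eval_monomial_def)

lemma eval_monomial_single [simp]: "eval_monomial s (Poly_Mapping.single j k) = s j ^ k"
  by (simp add: eval_monomial_def)

lemma peval_zero [simp]: "peval s 0 = 0"
  by (simp add: peval_def)

lemma peval_add: "peval s (p + q) = peval s p + peval s q"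
  unfolding peval_eq_sum_eval_monomial
  by (rule setsum_keys_plus_distrib) (auto simp: distrib_right)

lemma peval_uminus: "peval s (- p) = - peval s p"
  by (metis eq_neg_iff_add_eq_0 peval_add peval_zero)

lemma peval_diff: "peval s (p - q) = peval s p - peval s q"
  by (metis diff_conv_add_uminus peval_add peval_uminus)

lemma peval_single [simp]: "peval s (Poly_Mapping.single a c) = of_int c * eval_monomial s a"
  by (cases "c = 0") (simp_all add: peval_eq_sum_eval_monomial)

lemma peval_mult: "peval s (p * q) = peval s p * peval s q"
proof -
  have single_mult: "peval s (Poly_Mapping.single a 1 * q) = eval_monomial s a * peval s q" for a
    using subset_UNIV
  proof (induction q rule: frag_induction)
    case (one x) show ?case by (simp add: mult_single eval_monomial_add)
  next
    case (diff a' b) then show ?case by (simp add: right_diff_distrib peval_diff)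
  qed simp
  show ?thesis
    using subset_UNIV
  proof (induction p rule: frag_induction)
    case (one x) show ?case by (simp add: single_mult)
  next
    case (diff a' b) then show ?case by (simp add: left_diff_distrib peval_diff)
  qed simp
qed

lemma peval_one [simp]: "peval s 1 = 1"
proof -
  have "peval s (Poly_Mapping.single 0 1) = 1" by (simp del: single_one)
  then show ?thesis by simp
qed

lemma peval_of_int [simp]: "peval s (of_int c) = of_int c"
  by (simp flip: single_of_int)

lemma peval_Var [simp]: "peval s (Var j) = s j"
  by (simp add: Var_def)

lemma peval_sum: "peval s (sum g A) = (\<Sum>a\<in>A. peval s (g a))"
  by (induction A rule: infinite_finite_induct) (simp_all add: peval_add)

lemma peval_prod: "peval s (prod g A) = (\<Prod>a\<in>A. peval s (g a))"
  by (induction A rule: infinite_finite_induct) (simp_all add: peval_mult)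

lemma peval_power: "peval s (p ^ k) = peval s p ^ k"
  by (induction k) (simp_all add: peval_mult)

lemma peval_peval: "peval s (peval t f) = peval (\<lambda>k. peval s (t k)) f"
  by (simp only: peval_def[of t f] peval_def[of "\<lambda>k. peval s (t k)" f]
      peval_sum peval_mult peval_prod peval_power peval_of_int)

lemma peval_cong:
  assumes "\<And>v. v \<in> vars f \<Longrightarrow> s v = s' v"
  shows "peval s f = peval s' f"
proof -
  have "s v = s' v" if "m \<in> Poly_Mapping.keys f" "v \<in> Poly_Mapping.keys m" for m v
    using assms that by (auto simp: vars_def)
  then show ?thesis
    unfolding peval_def by (intro sum.cong refl arg_cong2[where f="(*)"] prod.cong) auto
qed

lemma Var_power: "Var v ^ k = Poly_Mapping.single (Poly_Mapping.single v k) 1"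
  by (induction k) (simp_all add: Var_def mult_single flip: single_add)

lemma eval_monomial_Var: "eval_monomial Var m = Poly_Mapping.single m 1"
proof -
  have prod_single: "(\<Prod>v\<in>A. Poly_Mapping.single (g v) (1::int)) = Poly_Mapping.single (\<Sum>v\<in>A. g v) 1"
    if "finite A" for A and g :: "nat \<Rightarrow> nat \<Rightarrow>\<^sub>0 nat"
    using that by (induction A rule: finite_induct) (simp_all add: mult_single)
  have "(\<Sum>k\<in>Poly_Mapping.keys m. Poly_Mapping.single k (Poly_Mapping.lookup m k)) = m"
    by (rule poly_mapping_eqI) (simp add: lookup_sum lookup_single when_def in_keys_iff)
  then show ?thesis by (simp add: eval_monomial_def Var_power prod_single)
qed

lemma peval_Var_self [simp]: "peval Var f = f"
  using subset_UNIV
proof (induction f rule: frag_induction)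
  case (one x) show ?case by (simp add: eval_monomial_Var)
next
  case (diff a b) then show ?case by (simp add: peval_diff)
qed simp

lemma Var_eq_iff [simp]: "Var i = Var j \<longleftrightarrow> i = j"
  unfolding Var_def by (metis lookup_single_eq lookup_single_not_eq one_neq_zero)

lemma Var_nonzero [simp]: "Var i \<noteq> 0"
  by (simp add: Var_def)

lemma dvd_prod_diff:
  fixes h :: "'a::comm_ring_1"
  assumes "\<And>i. i \<in> A \<Longrightarrow> h dvd (f i - g i)"
  shows "h dvd (prod f A - prod g A)"
  using assms
proof (induction A rule: infinite_finite_induct)
  case (insert a A)
  have "prod f (insert a A) - prod g (insert a A) = f a * (prod f A - prod g A) + (f a - g a) * prod g A"
    using insert by (simp add: algebra_simps)
  then show ?case using insert by simp
qed simp_all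

lemma dvd_peval_diff:
  fixes h :: "'a::comm_ring_1"
  assumes "\<And>k. h dvd (s k - t k)"
  shows "h dvd (peval s f - peval t f)"
proof -
  have "h dvd (s v ^ e - t v ^ e)" for v e
    using dvd_prod_diff[of "{..<e}" h "\<lambda>_. s v" "\<lambda>_. t v"] assms by simp
  then have "h dvd (eval_monomial s m - eval_monomial t m)" for m
    unfolding eval_monomial_def by (intro dvd_prod_diff)
  moreover have "peval s f - peval t f
      = (\<Sum>m\<in>Poly_Mapping.keys f. of_int (Poly_Mapping.lookup f m) * (eval_monomial s m - eval_monomial t m))"
    by (simp add: peval_eq_sum_eval_monomial algebra_simps sum_subtractf)
  ultimately show ?thesis by (simp add: dvd_sum)
qed

lemma exdiv_mult_cancel_left: "h \<noteq> 0 \<Longrightarrow> exdiv (h * q) h = q"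
  unfolding exdiv_def by (rule the_equality) auto

lemma mult_exdiv_eq:
  assumes "h \<noteq> 0" "h dvd g"
  shows "h * exdiv g h = g"
  using assms by (metis dvdE exdiv_mult_cancel_left)

text \<open>On \<open>{1..m}\<close> the values of \<open>insert_at i m\<close> are \<open>1, ..., m-1\<close> with \<open>m\<close> inserted at position \<open>i\<close>.\<close>

definition insert_at :: "nat \<Rightarrow> nat \<Rightarrow> nat \<Rightarrow> nat" where
  "insert_at i m k = (if k < i then k else if k = i then m else if k \<le> m then k - 1 else k)"

lemma Rim_eq_peval_insert_at: "Rim i m f = peval (\<lambda>k. Var (insert_at i m k)) f"
  unfolding Rim_def insert_at_def by (rule arg_cong2[where f=peval]) (auto simp: fun_eq_iff)

lemma peval_Rim: "peval x (Rim i m f) = peval (\<lambda>k. x (insert_at i m k)) f"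
  by (simp add: Rim_eq_peval_insert_at peval_peval)

lemma Tim_eq:
  assumes "i < m"
  shows "(Var i - Var m) * Tim i m f = Rim (i + 1) m f - Rim i m f"
proof -
  have "Var i - Var m dvd Var (insert_at (i + 1) m k) - Var (insert_at i m k)" for k
  proof -
    consider "k = i" | "k = i + 1" | "k \<noteq> i" "k \<noteq> i + 1" by blast
    then show ?thesis
    proof cases
      case 2
      then have "Var (insert_at (i + 1) m k) - Var (insert_at i m k) = - (Var i - Var m)"
        using assms by (simp add: insert_at_def)
      then show ?thesis by (metis dvd_minus_iff dvd_refl)
    qed (use assms in \<open>auto simp: insert_at_def\<close>)
  qed
  then have "Var i - Var m dvd Rim (i + 1) m f - Rim i m f"
    unfolding Rim_eq_peval_insert_at by (rule dvd_peval_diff)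
  then show ?thesis
    unfolding Tim_def using assms by (intro mult_exdiv_eq) auto
qed

lemma Ti_eq: "Var i * Ti i f = Ri (i + 1) f - Ri i f"
proof -
  have "Var i dvd (if k < i + 1 then Var k else if k = i + 1 then 0 else Var (k - 1))
                 - (if k < i then Var k else if k = i then 0 else Var (k - 1))" for k
  proof -
    consider "k < i" | "k = i" | "k = i + 1" | "k > i + 1" by linarith
    then show ?thesis by cases auto
  qed
  then have "Var i dvd Ri (i + 1) f - Ri i f"
    unfolding Ri_def by (rule dvd_peval_diff)
  then show ?thesis
    unfolding Ti_def by (intro mult_exdiv_eq) auto
qed

lemma peval_Tim:
  fixes x :: "nat \<Rightarrow> real"
  assumes "i < m" "x i \<noteq> x m"
  shows "peval x (Tim i m f)
       = (peval (\<lambda>k. x (insert_at (i + 1) m k)) f - peval (\<lambda>k. x (insert_at i m k)) f) / (x i - x m)"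
proof -
  have "(x i - x m) * peval x (Tim i m f)
      = peval (\<lambda>k. x (insert_at (i + 1) m k)) f - peval (\<lambda>k. x (insert_at i m k)) f"
    using arg_cong[OF Tim_eq[OF assms(1)], of "peval x"] by (simp add: peval_mult peval_diff peval_Rim)
  then show ?thesis using assms(2) by (simp add: field_simps)
qed

section \<open>Insertion permutations\<close>

definition insert_at_inv :: "nat \<Rightarrow> nat \<Rightarrow> nat \<Rightarrow> nat" where
  "insert_at_inv p n k = (if k < p then k else if k = n then p else if k < n then k + 1 else k)"

lemma insert_at_insert_at_inv: "1 \<le> p \<Longrightarrow> p \<le> n \<Longrightarrow> insert_at p n (insert_at_inv p n k) = k"
  by (auto simp: insert_at_def insert_at_inv_def)

lemma insert_at_inv_insert_at: "1 \<le> p \<Longrightarrow> p \<le> n \<Longrightarrow> insert_at_inv p n (insert_at p n k) = k"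
  by (auto simp: insert_at_def insert_at_inv_def)

lemma insert_at_permutes:
  assumes "1 \<le> p" "p \<le> n"
  shows "insert_at p n permutes {1..n}"
proof (rule bij_imp_permutes)
  show "bij_betw (insert_at p n) {1..n} {1..n}"
    by (rule bij_betw_byWitness[where f'="insert_at_inv p n"])
       (use assms in \<open>auto simp: insert_at_insert_at_inv insert_at_inv_insert_at,
                     auto simp: insert_at_def insert_at_inv_def\<close>)
qed (use assms in \<open>auto simp: insert_at_def\<close>)

lemma insert_at_inv_permutes:
  assumes "1 \<le> p" "p \<le> n"
  shows "insert_at_inv p n permutes {1..n}"
proof (rule bij_imp_permutes)
  show "bij_betw (insert_at_inv p n) {1..n} {1..n}"
    by (rule bij_betw_byWitness[where f'="insert_at p n"])
       (use assms in \<open>auto simp: insert_at_insert_at_inv insert_at_inv_insert_at,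
                     auto simp: insert_at_def insert_at_inv_def\<close>)
qed (use assms in \<open>auto simp: insert_at_inv_def\<close>)

lemma permutes_remove_last:
  assumes \<sigma>: "\<sigma> permutes {1..n}" and "n \<ge> 1"
  shows "inv \<sigma> n \<in> {1..n}" and "\<sigma> \<circ> insert_at_inv (inv \<sigma> n) n permutes {1..n - 1}"
proof -
  show p: "inv \<sigma> n \<in> {1..n}"
    using assms(2) permutes_in_image[OF permutes_inv[OF \<sigma>]] by auto
  have fixed: "(\<sigma> \<circ> insert_at_inv (inv \<sigma> n) n) x = x" if "x \<in> {1..n} - {1..n - 1}" for x
  proof -
    have "x = n" using that by auto
    then show ?thesis using permutes_inverses(1)[OF \<sigma>] p by (simp add: insert_at_inv_def)
  qed
  have "\<sigma> \<circ> insert_at_inv (inv \<sigma> n) n permutes {1..n}"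
    using p by (intro permutes_compose insert_at_inv_permutes \<sigma>) auto
  then show "\<sigma> \<circ> insert_at_inv (inv \<sigma> n) n permutes {1..n - 1}"
    by (rule permutes_superset) (use fixed in blast)
qed

lemma bij_betw_insert_at_permutes:
  assumes "n \<ge> 1"
  shows "bij_betw (\<lambda>(p, \<tau>). \<tau> \<circ> insert_at p n)
           ({1..n} \<times> {\<tau>. \<tau> permutes {1..n - 1}}) {\<sigma>. \<sigma> permutes {1..n}}"
proof (rule bij_betw_byWitness[where f'="\<lambda>\<sigma>. (inv \<sigma> n, \<sigma> \<circ> insert_at_inv (inv \<sigma> n) n)"])
  have composed: "\<tau> \<circ> insert_at p n permutes {1..n}" and last: "inv (\<tau> \<circ> insert_at p n) n = p"
    if "p \<in> {1..n}" "\<tau> permutes {1..n - 1}" for p \<tau>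
  proof -
    show \<sigma>: "\<tau> \<circ> insert_at p n permutes {1..n}"
      using that by (intro permutes_compose insert_at_permutes permutes_subset[OF that(2)]) auto
    have "\<tau> n = n" by (rule permutes_not_in[OF that(2)]) (use that in auto)
    then have "(\<tau> \<circ> insert_at p n) p = n" using that by (simp add: insert_at_def)
    then show "inv (\<tau> \<circ> insert_at p n) n = p" using permutes_inv_eq[OF \<sigma>] by simp
  qed
  show "\<forall>a\<in>{1..n} \<times> {\<tau>. \<tau> permutes {1..n - 1}}.
          (\<lambda>\<sigma>. (inv \<sigma> n, \<sigma> \<circ> insert_at_inv (inv \<sigma> n) n)) ((\<lambda>(p, \<tau>). \<tau> \<circ> insert_at p n) a) = a"
    by (auto simp: last fun_eq_iff insert_at_insert_at_inv)
  show "\<forall>\<sigma>\<in>{\<sigma>. \<sigma> permutes {1..n}}.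
          (\<lambda>(p, \<tau>). \<tau> \<circ> insert_at p n) ((\<lambda>\<sigma>. (inv \<sigma> n, \<sigma> \<circ> insert_at_inv (inv \<sigma> n) n)) \<sigma>) = \<sigma>"
    using permutes_remove_last(1) assms by (auto simp: fun_eq_iff insert_at_inv_insert_at)
  show "(\<lambda>(p, \<tau>). \<tau> \<circ> insert_at p n) ` ({1..n} \<times> {\<tau>. \<tau> permutes {1..n - 1}}) \<subseteq> {\<sigma>. \<sigma> permutes {1..n}}"
  proof (rule image_subsetI)
    fix a assume "a \<in> {1..n} \<times> {\<tau>. \<tau> permutes {1..n - 1}}"
    then show "(\<lambda>(p, \<tau>). \<tau> \<circ> insert_at p n) a \<in> {\<sigma>. \<sigma> permutes {1..n}}"
      using composed by (auto simp del: atLeastAtMost_iff)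
  qed
  show "(\<lambda>\<sigma>. (inv \<sigma> n, \<sigma> \<circ> insert_at_inv (inv \<sigma> n) n)) ` {\<sigma>. \<sigma> permutes {1..n}}
          \<subseteq> {1..n} \<times> {\<tau>. \<tau> permutes {1..n - 1}}"
    using permutes_remove_last[OF _ assms] by auto
qed

section \<open>The recursion for the divided symmetrization\<close>

definition path_prod :: "(nat \<Rightarrow> real) \<Rightarrow> nat \<Rightarrow> real" where
  "path_prod y n = (\<Prod>j\<in>{1..<n}. y j - y (j + 1))"

lemma path_prod_nonzero:
  assumes "inj_on y {1..n}" "m \<le> n"
  shows "path_prod y m \<noteq> 0"
proof -
  have "y j \<noteq> y (j + 1)" if "j \<in> {1..<m}" for j
    using assms that inj_onD[of y "{1..n}" j "j + 1"] by auto
  then show ?thesis by (simp add: path_prod_def)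
qed

lemma path_prod_insert_at:
  assumes "1 \<le> p" "p \<le> n"
  shows "path_prod (\<lambda>k. y (insert_at p n k)) n
       = path_prod y (p - 1) * (if p \<ge> 2 then y (p - 1) - y n else 1)
         * (if p < n then y n - y p else 1) * (\<Prod>j\<in>{p..<n - 1}. y j - y (j + 1))"
proof -
  let ?e = "\<lambda>j. y (insert_at p n j) - y (insert_at p n (j + 1))"
  have "path_prod (\<lambda>k. y (insert_at p n k)) n = prod ?e {1..<p} * prod ?e {p..<n}"
    unfolding path_prod_def using assms by (simp add: prod.atLeastLessThan_concat)
  moreover have "prod ?e {1..<p} = path_prod y (p - 1) * (if p \<ge> 2 then y (p - 1) - y n else 1)"
  proof (cases "p \<ge> 2")
    case True
    then have "prod ?e {1..<p} = prod ?e {1..<p - 1} * ?e (p - 1)"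
      using prod.atLeastLessThan_Suc[of 1 "p - 1" ?e] by (simp add: Suc_diff_Suc numeral_2_eq_2)
    moreover have "prod ?e {1..<p - 1} = path_prod y (p - 1)"
      unfolding path_prod_def by (rule prod.cong) (auto simp: insert_at_def)
    moreover have "?e (p - 1) = y (p - 1) - y n" using True by (simp add: insert_at_def)
    ultimately show ?thesis using True by simp
  next
    case False
    then have "p = 1" using assms by simp
    then show ?thesis by (simp add: path_prod_def)
  qed
  moreover have "prod ?e {p..<n} = (if p < n then y n - y p else 1) * (\<Prod>j\<in>{p..<n - 1}. y j - y (j + 1))"
  proof (cases "p < n")
    case True
    then have "prod ?e {p..<n} = ?e p * prod ?e {p + 1..<(n - 1) + 1}"
      by (simp add: prod.atLeast_Suc_lessThan)
    also have "prod ?e {p + 1..<(n - 1) + 1} = (\<Prod>i\<in>{p..<n - 1}. ?e (i + 1))"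
      by (rule prod.shift_bounds_nat_ivl)
    also have "(\<Prod>i\<in>{p..<n - 1}. ?e (i + 1)) = (\<Prod>j\<in>{p..<n - 1}. y j - y (j + 1))"
      by (rule prod.cong) (auto simp: insert_at_def)
    also have "?e p = y n - y p" using True assms by (simp add: insert_at_def)
    finally show ?thesis using True by simp
  qed (use assms in simp)
  ultimately show ?thesis by (simp only: mult.assoc)
qed

lemma partial_fraction_insert:
  fixes L R a c w :: "'a::field"
  assumes "L \<noteq> 0" "R \<noteq> 0" "a \<noteq> w" "c \<noteq> w" "a \<noteq> c"
  shows "1 / (L * (a - w) * (w - c) * R) = 1 / ((a - w) * (L * (a - c) * R)) - 1 / ((c - w) * (L * (a - c) * R))"
proof -
  have "a - w \<noteq> 0" "w - c \<noteq> 0" "a - c \<noteq> 0" "c - w \<noteq> 0" using assms by auto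
  with assms show ?thesis by (simp add: divide_simps) algebra
qed

lemma inverse_path_prod_insert_at:
  fixes y :: "nat \<Rightarrow> real"
  assumes n: "n \<ge> 2" and inj: "inj_on y {1..n}" and p: "p \<in> {1..n}"
  defines "b i \<equiv> (if 1 \<le> i \<and> i < n then 1 / ((y i - y n) * path_prod y (n - 1)) else 0)"
  shows "1 / path_prod (\<lambda>k. y (insert_at p n k)) n = b (p - 1) - b p"
proof -
  have ne: "y i \<noteq> y j" if "i \<in> {1..n}" "j \<in> {1..n}" "i \<noteq> j" for i j
    using inj that by (auto dest: inj_onD)
  have D: "path_prod y (n - 1) \<noteq> 0" by (rule path_prod_nonzero[OF inj]) simp
  consider "p = 1" | "2 \<le> p" "p < n" | "p = n" using p n by force
  then show ?thesis
  proof cases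
    case 1
    then have "path_prod (\<lambda>k. y (insert_at p n k)) n = - ((y 1 - y n) * path_prod y (n - 1))"
      using n path_prod_insert_at[of p n y] by (simp add: path_prod_def) (simp add: algebra_simps)
    then show ?thesis using 1 n by (simp add: b_def)
  next
    case 2
    let ?L = "path_prod y (p - 1)" and ?R = "\<Prod>j\<in>{p..<n - 1}. y j - y (j + 1)"
    have "path_prod y (n - 1) = (\<Prod>j\<in>{1..<Suc (p - 1)}. y j - y (j + 1)) * ?R"
      unfolding path_prod_def using 2 by (subst prod.atLeastLessThan_concat[symmetric]) auto
    also have "(\<Prod>j\<in>{1..<Suc (p - 1)}. y j - y (j + 1)) = ?L * (y (p - 1) - y p)"
      using 2 by (subst prod.atLeastLessThan_Suc) (auto simp: path_prod_def)
    finally have Dn: "path_prod y (n - 1) = ?L * (y (p - 1) - y p) * ?R" by simp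
    have "?L \<noteq> 0" by (rule path_prod_nonzero[OF inj]) (use 2 in auto)
    moreover have "?R \<noteq> 0" using D Dn by simp
    moreover have "y (p - 1) \<noteq> y n" "y p \<noteq> y n" "y (p - 1) \<noteq> y p" by (rule ne; use 2 in auto)+
    ultimately have "1 / (?L * (y (p - 1) - y n) * (y n - y p) * ?R)
        = 1 / ((y (p - 1) - y n) * path_prod y (n - 1)) - 1 / ((y p - y n) * path_prod y (n - 1))"
      unfolding Dn by (rule partial_fraction_insert)
    moreover have "path_prod (\<lambda>k. y (insert_at p n k)) n = ?L * (y (p - 1) - y n) * (y n - y p) * ?R"
      using 2 by (simp add: path_prod_insert_at)
    moreover have "b (p - 1) = 1 / ((y (p - 1) - y n) * path_prod y (n - 1))"
      and "b p = 1 / ((y p - y n) * path_prod y (n - 1))"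
      unfolding b_def using 2 by auto
    ultimately show ?thesis by simp
  next
    case 3
    then have "path_prod (\<lambda>k. y (insert_at p n k)) n = (y (n - 1) - y n) * path_prod y (n - 1)"
      using n path_prod_insert_at[of p n y] by (simp add: path_prod_def)
    then show ?thesis using 3 n by (auto simp: b_def)
  qed
qed

lemma summation_by_parts:
  fixes A b :: "nat \<Rightarrow> 'a::comm_ring_1"
  assumes "n \<ge> 1"
  shows "(\<Sum>p=1..n. A p * (b (p - 1) - b p)) = (\<Sum>i=1..<n. (A (i + 1) - A i) * b i) + A 1 * b 0 - A n * b n"
  using assms
proof (induction n rule: dec_induct)
  case (step n)
  then show ?case by (simp add: algebra_simps)
qed (simp add: algebra_simps)

lemma sum_insert_at_path_prod:
  fixes y A :: "nat \<Rightarrow> real"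
  assumes n: "n \<ge> 2" and inj: "inj_on y {1..n}"
  shows "(\<Sum>p=1..n. A p / path_prod (\<lambda>k. y (insert_at p n k)) n)
       = (\<Sum>i=1..<n. (A (i + 1) - A i) / (y i - y n)) / path_prod y (n - 1)"
proof -
  define b where "b i = (if 1 \<le> i \<and> i < n then 1 / ((y i - y n) * path_prod y (n - 1)) else 0)" for i
  have "(\<Sum>p=1..n. A p / path_prod (\<lambda>k. y (insert_at p n k)) n) = (\<Sum>p=1..n. A p * (b (p - 1) - b p))"
  proof (rule sum.cong)
    fix p assume "p \<in> {1..n}"
    then have "1 / path_prod (\<lambda>k. y (insert_at p n k)) n = b (p - 1) - b p"
      unfolding b_def by (rule inverse_path_prod_insert_at[OF n inj])
    then show "A p / path_prod (\<lambda>k. y (insert_at p n k)) n = A p * (b (p - 1) - b p)"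
      by (metis mult.right_neutral times_divide_eq_right)
  qed simp
  also have "\<dots> = (\<Sum>i=1..<n. (A (i + 1) - A i) * b i) + A 1 * b 0 - A n * b n"
    using n by (intro summation_by_parts) auto
  also have "\<dots> = (\<Sum>i=1..<n. (A (i + 1) - A i) / (y i - y n)) / path_prod y (n - 1)"
    by (simp add: b_def sum_divide_distrib)
  finally show ?thesis .
qed

text \<open>\<open>Tsum_fun m\<close> is \<open>T\<^sub>1\<^sub>,\<^sub>m + ... + T\<^sub>m\<^sub>-\<^sub>1\<^sub>,\<^sub>m\<close> with the divided differences taken pointwise,
so that it acts on arbitrary functions of the point.\<close>

definition dsym_fun :: "nat \<Rightarrow> ((nat \<Rightarrow> real) \<Rightarrow> real) \<Rightarrow> (nat \<Rightarrow> real) \<Rightarrow> real" where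
  "dsym_fun n F x = (\<Sum>\<sigma>\<in>{\<sigma>. \<sigma> permutes {1..n}}. F (\<lambda>k. x (\<sigma> k)) / path_prod (\<lambda>k. x (\<sigma> k)) n)"

definition Tsum_fun :: "nat \<Rightarrow> ((nat \<Rightarrow> real) \<Rightarrow> real) \<Rightarrow> (nat \<Rightarrow> real) \<Rightarrow> real" where
  "Tsum_fun m F y = (\<Sum>i=1..<m. (F (\<lambda>k. y (insert_at (i + 1) m k)) - F (\<lambda>k. y (insert_at i m k))) / (y i - y m))"

lemma dsym_eq_dsym_fun: "dsym n f x = dsym_fun n (\<lambda>y. peval y f) x"
  by (simp add: dsym_def dsym_fun_def path_prod_def)

lemma peval_Tsum:
  fixes y :: "nat \<Rightarrow> real"
  assumes "\<And>i. i \<in> {1..<m} \<Longrightarrow> y i \<noteq> y m"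
  shows "peval y (Tsum m f) = Tsum_fun m (\<lambda>z. peval z f) y"
  unfolding Tsum_def Tsum_fun_def peval_sum
  by (rule sum.cong) (use assms in \<open>auto simp: peval_Tim\<close>)

lemma dsym_fun_cong:
  assumes "\<And>\<tau>. \<tau> permutes {1..n} \<Longrightarrow> F (\<lambda>k. x (\<tau> k)) = G (\<lambda>k. x (\<tau> k))"
  shows "dsym_fun n F x = dsym_fun n G x"
  unfolding dsym_fun_def by (rule sum.cong) (use assms in auto)

lemma dsym_fun_reduce:
  assumes n: "n \<ge> 2" and inj: "inj_on x {1..n}"
  shows "dsym_fun n F x = dsym_fun (n - 1) (Tsum_fun n F) x"
proof -
  let ?P = "\<lambda>k. {\<sigma>. \<sigma> permutes {1..k}}"
  define g where "g \<sigma> = F (\<lambda>k. x (\<sigma> k)) / path_prod (\<lambda>k. x (\<sigma> k)) n" for \<sigma>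
  have "dsym_fun n F x = sum g (?P n)" unfolding dsym_fun_def g_def ..
  also have "\<dots> = (\<Sum>(p, \<tau>)\<in>{1..n} \<times> ?P (n - 1). g (\<tau> \<circ> insert_at p n))"
    using n by (subst sum.reindex_bij_betw[symmetric, OF bij_betw_insert_at_permutes])
      (auto simp: case_prod_unfold)
  also have "\<dots> = (\<Sum>\<tau>\<in>?P (n - 1). \<Sum>p=1..n. g (\<tau> \<circ> insert_at p n))"
    by (subst sum.cartesian_product[symmetric]) (rule sum.swap)
  also have "\<dots> = dsym_fun (n - 1) (Tsum_fun n F) x"
    unfolding dsym_fun_def
  proof (rule sum.cong)
    fix \<tau> assume "\<tau> \<in> ?P (n - 1)"
    then have \<tau>: "\<tau> permutes {1..n}" using permutes_subset[of \<tau> "{1..n - 1}" "{1..n}"] by auto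
    have "inj_on (x \<circ> \<tau>) {1..n}"
      using inj permutes_inj_on[OF \<tau>] permutes_image[OF \<tau>] by (intro comp_inj_on) auto
    then have "(\<Sum>p=1..n. F (\<lambda>k. x (\<tau> (insert_at p n k))) / path_prod (\<lambda>k. x (\<tau> (insert_at p n k))) n)
        = Tsum_fun n F (\<lambda>k. x (\<tau> k)) / path_prod (\<lambda>k. x (\<tau> k)) (n - 1)"
      using sum_insert_at_path_prod[OF n, of "\<lambda>k. x (\<tau> k)"] by (simp add: Tsum_fun_def o_def)
    then show "(\<Sum>p=1..n. g (\<tau> \<circ> insert_at p n))
        = Tsum_fun n F (\<lambda>k. x (\<tau> k)) / path_prod (\<lambda>k. x (\<tau> k)) (n - 1)"
      by (simp add: g_def)
  qed simp
  finally show ?thesis .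
qed

lemma permutes_atLeastAtMost_le_one: "(n::nat) \<le> 1 \<Longrightarrow> {\<sigma>. \<sigma> permutes {1..n}} = {id}"
proof -
  assume "n \<le> 1"
  then have "n = 0 \<or> n = 1" by arith
  then show ?thesis by (elim disjE) simp_all
qed

theorem dsym_eq_peval_Tsum_chain:
  fixes x :: "nat \<Rightarrow> real"
  assumes "inj_on x {1..n}"
  shows "dsym n f x = peval x (foldr Tsum [2..<n + 1] f)"
  using assms
proof (induction n arbitrary: f)
  case (Suc m)
  show ?case
  proof (cases "m = 0")
    case False
    have "dsym (Suc m) f x = dsym_fun m (Tsum_fun (Suc m) (\<lambda>y. peval y f)) x"
      using dsym_fun_reduce[of "Suc m" x] Suc.prems False by (simp add: dsym_eq_dsym_fun)
    also have "\<dots> = dsym_fun m (\<lambda>y. peval y (Tsum (Suc m) f)) x"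
    proof (rule dsym_fun_cong)
      fix \<tau> assume \<tau>: "\<tau> permutes {1..m}"
      have "x (\<tau> i) \<noteq> x (Suc m)" if "i \<in> {1..<Suc m}" for i
        using permutes_in_image[OF \<tau>, of i] that Suc.prems by (auto dest: inj_onD)
      moreover have "\<tau> (Suc m) = Suc m" by (rule permutes_not_in[OF \<tau>]) auto
      ultimately show "Tsum_fun (Suc m) (\<lambda>y. peval y f) (\<lambda>k. x (\<tau> k)) = peval (\<lambda>k. x (\<tau> k)) (Tsum (Suc m) f)"
        by (intro peval_Tsum[symmetric]) auto
    qed
    also have "\<dots> = peval x (foldr Tsum [2..<m + 1] (Tsum (Suc m) f))"
      using Suc.IH[of "Tsum (Suc m) f"] Suc.prems by (simp add: dsym_eq_dsym_fun inj_on_subset)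
    finally show ?thesis using False by simp
  qed (simp add: dsym_def permutes_atLeastAtMost_le_one)
qed (simp add: dsym_def permutes_atLeastAtMost_le_one)

lemma vars_zero [simp]: "vars 0 = {}"
  by (simp add: vars_def)

lemma vars_of_int [simp]: "vars (of_int c) = {}"
  by (simp add: vars_def flip: single_of_int)

lemma vars_one [simp]: "vars 1 = {}"
  using vars_of_int[of 1] by simp

lemma vars_Var [simp]: "vars (Var k) = {k}"
  by (simp add: vars_def Var_def)

lemma vars_uminus [simp]: "vars (- p) = vars p"
  by (simp add: vars_def)

lemma vars_add: "vars (p + q) \<subseteq> vars p \<union> vars q"
  unfolding vars_def using keys_add by fastforce

lemma vars_diff: "vars (p - q) \<subseteq> vars p \<union> vars q"
  using vars_add[of p "- q"] by simp

lemma vars_mult: "vars (p * q) \<subseteq> vars p \<union> vars q"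
proof
  fix v assume "v \<in> vars (p * q)"
  then obtain m where m: "m \<in> Poly_Mapping.keys (p * q)" "v \<in> Poly_Mapping.keys m"
    by (auto simp: vars_def)
  then obtain a b where "m = a + b" "a \<in> Poly_Mapping.keys p" "b \<in> Poly_Mapping.keys q"
    using keys_mult by blast
  then show "v \<in> vars p \<union> vars q" using m(2) keys_add[of a b] by (auto simp: vars_def)
qed

lemma vars_sum: "vars (sum g A) \<subseteq> (\<Union>a\<in>A. vars (g a))"
proof (induction A rule: infinite_finite_induct)
  case (insert a A) then show ?case using vars_add[of "g a" "sum g A"] by auto
qed simp_all

lemma vars_prod: "vars (prod g A) \<subseteq> (\<Union>a\<in>A. vars (g a))"
proof (induction A rule: infinite_finite_induct)
  case (insert a A) then show ?case using vars_mult[of "g a" "prod g A"] by auto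
qed simp_all

lemma vars_power: "vars (p ^ k) \<subseteq> vars p"
  using vars_prod[of "\<lambda>_. p" "{..<k}"] by (auto split: if_splits)

lemma vars_peval: "vars (peval t f) \<subseteq> (\<Union>v\<in>vars f. vars (t v))"
proof -
  have "vars (of_int (Poly_Mapping.lookup f m) * eval_monomial t m) \<subseteq> (\<Union>v\<in>vars f. vars (t v))"
    if m: "m \<in> Poly_Mapping.keys f" for m
  proof -
    have "vars (of_int (Poly_Mapping.lookup f m) * eval_monomial t m) \<subseteq> vars (eval_monomial t m)"
      using vars_mult by fastforce
    also have "\<dots> \<subseteq> (\<Union>v\<in>Poly_Mapping.keys m. vars (t v ^ Poly_Mapping.lookup m v))"
      unfolding eval_monomial_def by (rule vars_prod)
    also have "\<dots> \<subseteq> (\<Union>v\<in>vars f. vars (t v))"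
      using vars_power m by (fastforce simp: vars_def)
    finally show ?thesis .
  qed
  then show ?thesis
    unfolding peval_eq_sum_eval_monomial using vars_sum by (fastforce simp del: of_int_eq_iff)
qed

text \<open>Substituting 0 for the variables outside \<open>S\<close> fixes \<open>Var i * q\<close>, hence fixes \<open>q\<close>.\<close>

lemma vars_factor_subset:
  assumes eq: "Var i * q = d" and d: "vars d \<subseteq> S" and i: "i \<in> S"
  shows "vars q \<subseteq> S"
proof -
  define \<phi> where "\<phi> = (\<lambda>k. if k \<in> S then Var k else (0::zpoly))"
  have "peval \<phi> d = peval Var d" by (rule peval_cong) (use d in \<open>auto simp: \<phi>_def\<close>)
  then have "Var i * peval \<phi> q = Var i * q"
    using eq i by (auto simp: peval_mult \<phi>_def)
  then have "peval \<phi> q = q" by simp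
  moreover have "vars (peval \<phi> q) \<subseteq> S"
    using vars_peval[of \<phi> q] by (auto simp: \<phi>_def split: if_splits)
  ultimately show ?thesis by simp
qed

lemma vars_Ri:
  assumes "vars f \<subseteq> {1..m}" "1 \<le> j" "j \<le> m"
  shows "vars (Ri j f) \<subseteq> {1..m - 1}"
proof -
  have "vars (Ri j f) \<subseteq> (\<Union>k\<in>vars f. vars (if k < j then Var k else if k = j then 0 else Var (k - 1)))"
    unfolding Ri_def by (rule vars_peval)
  also have "\<dots> \<subseteq> {1..m - 1}"
    using assms(2,3) by (auto split: if_splits dest!: subsetD[OF assms(1)])
  finally show ?thesis .
qed

lemma vars_Ti:
  assumes "vars f \<subseteq> {1..m}" "1 \<le> i" "i < m"
  shows "vars (Ti i f) \<subseteq> {1..m - 1}"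
proof (rule vars_factor_subset[OF Ti_eq])
  show "vars (Ri (i + 1) f - Ri i f) \<subseteq> {1..m - 1}"
    using vars_diff[of "Ri (i + 1) f" "Ri i f"] vars_Ri[OF assms(1), of i] vars_Ri[OF assms(1), of "i + 1"] assms
    by auto
qed (use assms in auto)

lemma vars_Tsum0:
  assumes "vars f \<subseteq> {1..m}"
  shows "vars (Tsum0 (m - 1) f) \<subseteq> {1..m - 1}"
  unfolding Tsum0_def using vars_sum[of "\<lambda>i. Ti i f" "{1..m - 1}"] vars_Ti[OF assms] by fastforce

section \<open>Setting variables to zero\<close>

definition zero_var :: "nat \<Rightarrow> nat \<Rightarrow> zpoly" where
  "zero_var m k = (if k = m then 0 else Var k)"

definition zero_vars_2_to :: "nat \<Rightarrow> nat \<Rightarrow> zpoly" where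
  "zero_vars_2_to m k = (if 2 \<le> k \<and> k \<le> m then 0 else Var k)"

lemma peval_zero_var_Rim:
  assumes "vars g \<subseteq> {1..m}" "1 \<le> j" "j \<le> m"
  shows "peval (zero_var m) (Rim j m g) = Ri j g"
  unfolding Rim_eq_peval_insert_at peval_peval Ri_def peval_Var
  by (rule peval_cong) (use assms in \<open>auto simp: zero_var_def insert_at_def\<close>)

lemma peval_zero_var_Tim:
  assumes "vars g \<subseteq> {1..m}" "1 \<le> i" "i < m"
  shows "peval (zero_var m) (Tim i m g) = Ti i g"
proof -
  have "Var i * peval (zero_var m) (Tim i m g) = peval (zero_var m) ((Var i - Var m) * Tim i m g)"
    using assms by (simp add: peval_mult peval_diff zero_var_def)
  also have "\<dots> = Ri (i + 1) g - Ri i g"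
    using assms by (simp add: Tim_eq peval_diff peval_zero_var_Rim)
  also have "\<dots> = Var i * Ti i g" by (rule Ti_eq[symmetric])
  finally show ?thesis by simp
qed

lemma peval_zero_var_Tsum:
  assumes "vars g \<subseteq> {1..m}"
  shows "peval (zero_var m) (Tsum m g) = Tsum0 (m - 1) g"
proof -
  have "{1..<m} = {1..m - 1}" by auto
  then show ?thesis
    unfolding Tsum_def Tsum0_def peval_sum
    by (auto intro!: sum.cong peval_zero_var_Tim assms)
qed

lemma peval_zero_var_Rim_commute:
  assumes "j \<le> m" "m < n"
  shows "peval (zero_var n) (Rim j m g) = Rim j m (peval (zero_var n) g)"
  unfolding Rim_eq_peval_insert_at peval_peval
  by (rule arg_cong2[where f=peval]) (use assms in \<open>auto simp: fun_eq_iff zero_var_def insert_at_def\<close>)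

lemma peval_zero_var_Tim_commute:
  assumes "i < m" "m < n"
  shows "peval (zero_var n) (Tim i m g) = Tim i m (peval (zero_var n) g)"
proof -
  have "(Var i - Var m) * peval (zero_var n) (Tim i m g) = peval (zero_var n) ((Var i - Var m) * Tim i m g)"
    using assms by (simp add: peval_mult peval_diff zero_var_def)
  also have "\<dots> = Rim (i + 1) m (peval (zero_var n) g) - Rim i m (peval (zero_var n) g)"
    using assms by (simp add: Tim_eq peval_diff peval_zero_var_Rim_commute)
  also have "\<dots> = (Var i - Var m) * Tim i m (peval (zero_var n) g)"
    by (rule Tim_eq[OF assms(1), symmetric])
  finally show ?thesis using assms by simp
qed

lemma peval_zero_var_foldr_Tsum:
  assumes "\<forall>m\<in>set ms. m < n"
  shows "peval (zero_var n) (foldr Tsum ms g) = foldr Tsum ms (peval (zero_var n) g)"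
  using assms by (induction ms) (simp_all add: Tsum_def peval_sum peval_zero_var_Tim_commute)

lemma peval_zero_vars_2_to_Tsum_chain:
  assumes "1 \<le> m" "vars g \<subseteq> {1..m}"
  shows "peval (zero_vars_2_to m) (foldr Tsum [2..<m + 1] g) = foldr Tsum0 [1..<m] g"
  using assms
proof (induction m arbitrary: g rule: dec_induct)
  case base
  have "zero_vars_2_to 1 = Var" by (auto simp: fun_eq_iff zero_vars_2_to_def)
  then show ?case by simp
next
  case (step m)
  have split: "[2..<Suc m + 1] = [2..<m + 1] @ [Suc m]" using step.hyps by simp
  have "zero_vars_2_to (Suc m) = (\<lambda>k. peval (zero_vars_2_to m) (zero_var (Suc m) k))"
    using step.hyps by (auto simp: fun_eq_iff zero_var_def zero_vars_2_to_def)
  then have "peval (zero_vars_2_to (Suc m)) (foldr Tsum [2..<Suc m + 1] g)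
      = peval (zero_vars_2_to m) (peval (zero_var (Suc m)) (foldr Tsum [2..<m + 1] (Tsum (Suc m) g)))"
    unfolding split foldr_append by (simp add: peval_peval)
  also have "\<dots> = peval (zero_vars_2_to m) (foldr Tsum [2..<m + 1] (Tsum0 m g))"
    by (subst peval_zero_var_foldr_Tsum) (auto simp: peval_zero_var_Tsum[OF step.prems])
  also have "\<dots> = foldr Tsum0 [1..<m] (Tsum0 m g)"
    using step.IH step.hyps vars_Tsum0[OF step.prems] by simp
  also have "\<dots> = foldr Tsum0 [1..<Suc m] g" using step.hyps by simp
  finally show ?case .
qed

section \<open>Homogeneity and continuity\<close>

lemma peval_homogeneous_scale:
  fixes y :: "nat \<Rightarrow> 'a::comm_ring_1"
  assumes "homogeneous d f"
  shows "peval (\<lambda>k. t * y k) f = t ^ d * peval y f"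
  unfolding peval_eq_sum_eval_monomial sum_distrib_left
proof (rule sum.cong)
  fix m assume m: "m \<in> Poly_Mapping.keys f"
  have "eval_monomial (\<lambda>k. t * y k) m
      = (\<Prod>v\<in>Poly_Mapping.keys m. t ^ Poly_Mapping.lookup m v) * eval_monomial y m"
    by (simp add: eval_monomial_def power_mult_distrib prod.distrib)
  also have "(\<Prod>v\<in>Poly_Mapping.keys m. t ^ Poly_Mapping.lookup m v) = t ^ d"
    using assms m by (simp add: homogeneous_def power_sum[symmetric])
  finally show "of_int (Poly_Mapping.lookup f m) * eval_monomial (\<lambda>k. t * y k) m
      = t ^ d * (of_int (Poly_Mapping.lookup f m) * eval_monomial y m)"
    by simp
qed simp

lemma dsym_homogeneous_scale:
  assumes "homogeneous (n - 1) f" "t \<noteq> 0"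
  shows "dsym n f (\<lambda>k. t * x k) = dsym n f x"
proof -
  have "path_prod (\<lambda>k. t * y k) n = t ^ (n - 1) * path_prod y n" for y
    by (simp add: path_prod_def prod.distrib flip: right_diff_distrib)
  then show ?thesis
    using assms by (simp add: dsym_eq_dsym_fun dsym_fun_def peval_homogeneous_scale)
qed

lemma isCont_peval_line: "isCont (\<lambda>t::real. peval (\<lambda>k. a k + t * b k) G) t0"
  unfolding peval_def by (intro continuous_intros)

lemma isCont_eventually_eq_imp_eq:
  fixes p :: "'a::{perfect_space, t2_space} \<Rightarrow> 'b::t2_space"
  assumes "isCont p a" "eventually (\<lambda>t. p t = c) (at a)"
  shows "p a = c"
proof (rule tendsto_unique[OF at_neq_bot])
  show "(p \<longlongrightarrow> p a) (at a)" using assms(1) by (simp add: isCont_def)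
  show "(p \<longlongrightarrow> c) (at a)" using assms(2) by (rule tendsto_eventually)
qed

lemma eventually_inj_on_perturbation:
  fixes y :: "nat \<Rightarrow> real"
  assumes "finite A"
  shows "eventually (\<lambda>t. inj_on (\<lambda>k. y k + t * real k) A) (at 0)"
proof -
  have "eventually (\<lambda>t. y i + t * real i \<noteq> y j + t * real j) (at 0)" if "i \<noteq> j" for i j
  proof (rule eventually_mono[OF eventually_neq_at_within[of "(y i - y j) / (real j - real i)"]])
    fix t assume t: "t \<noteq> (y i - y j) / (real j - real i)"
    show "y i + t * real i \<noteq> y j + t * real j"
    proof
      assume "y i + t * real i = y j + t * real j"
      then have "t * (real j - real i) = y i - y j" by (simp add: algebra_simps)
      moreover have "real j - real i \<noteq> 0" using that by simp
      ultimately show False using t by (simp add: eq_divide_eq)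
    qed
  qed
  then have "eventually (\<lambda>t. \<forall>(i, j)\<in>A \<times> A. i \<noteq> j \<longrightarrow> y i + t * real i \<noteq> y j + t * real j) (at 0)"
    using assms by (intro eventually_ball_finite) auto
  then show ?thesis
    by (rule eventually_mono) (auto simp: inj_on_def)
qed

lemma peval_eq_if_eq_on_inj:
  assumes "\<And>z :: nat \<Rightarrow> real. inj_on z {1..n} \<Longrightarrow> peval z G = c"
  shows "peval y G = c"
proof -
  have "peval (\<lambda>k. y k + 0 * real k) G = c"
  proof (rule isCont_eventually_eq_imp_eq[OF isCont_peval_line])
    show "eventually (\<lambda>t. peval (\<lambda>k. y k + t * real k) G = c) (at 0)"
      using eventually_inj_on_perturbation[OF finite_atLeastAtMost, of y 1 n] by (rule eventually_mono) (erule assms)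
  qed
  then show ?thesis by simp
qed

lemma peval_Tsum_chain_constant:
  fixes y :: "nat \<Rightarrow> real"
  assumes "homogeneous (n - 1) f"
  shows "peval y (foldr Tsum [2..<n + 1] f) = peval (\<lambda>_. 0) (foldr Tsum [2..<n + 1] f)"
proof (rule peval_eq_if_eq_on_inj)
  fix x :: "nat \<Rightarrow> real" assume inj: "inj_on x {1..n}"
  have scale: "peval (\<lambda>k. 0 + t * x k) (foldr Tsum [2..<n + 1] f) = peval x (foldr Tsum [2..<n + 1] f)"
    if "t \<noteq> 0" for t
  proof -
    have "inj_on (\<lambda>k. t * x k) {1..n}"
    proof (rule inj_onI)
      fix i j assume ij: "i \<in> {1..n}" "j \<in> {1..n}" and "t * x i = t * x j"
      then have "x i = x j" using that by simp
      then show "i = j" using inj ij by (blast dest: inj_onD)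
    qed
    then show ?thesis
      using dsym_homogeneous_scale[OF assms that, of x] inj by (simp add: dsym_eq_peval_Tsum_chain)
  qed
  have "peval (\<lambda>k. 0 + 0 * x k) (foldr Tsum [2..<n + 1] f) = peval x (foldr Tsum [2..<n + 1] f)"
  proof (rule isCont_eventually_eq_imp_eq[OF isCont_peval_line])
    show "eventually (\<lambda>t. peval (\<lambda>k. 0 + t * x k) (foldr Tsum [2..<n + 1] f) = peval x (foldr Tsum [2..<n + 1] f)) (at 0)"
      using eventually_neq_at_within[of 0 0 UNIV] by (rule eventually_mono) (erule scale)
  qed
  then show "peval x (foldr Tsum [2..<n + 1] f) = peval (\<lambda>_. 0) (foldr Tsum [2..<n + 1] f)"
    by simp
qed

theorem mainTheorem15:
  fixes n :: nat and f :: zpoly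
  assumes "vars f \<subseteq> {1..n}"
  shows "(\<forall>x::nat \<Rightarrow> real. inj_on x {1..n} \<longrightarrow>
            dsym n f x = peval x (foldr Tsum [2..<n+1] f))
       \<and> (n \<ge> 1 \<and> homogeneous (n - 1) f \<longrightarrow>
            (\<forall>x::nat \<Rightarrow> real. inj_on x {1..n} \<longrightarrow>
              dsym n f x = peval x (foldr Tsum0 [1..<n] f)))"
proof (intro conjI allI impI)
  fix x :: "nat \<Rightarrow> real" assume "inj_on x {1..n}"
  then show "dsym n f x = peval x (foldr Tsum [2..<n+1] f)" by (rule dsym_eq_peval_Tsum_chain)
next
  fix x :: "nat \<Rightarrow> real"
  assume "1 \<le> n \<and> homogeneous (n - 1) f" and inj: "inj_on x {1..n}"
  then have n: "1 \<le> n" and hom: "homogeneous (n - 1) f" by simp_all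
  let ?G = "foldr Tsum [2..<n + 1] f"
  have "dsym n f x = peval x ?G" using inj by (rule dsym_eq_peval_Tsum_chain)
  also have "\<dots> = peval (\<lambda>k. peval x (zero_vars_2_to n k)) ?G"
    by (rule trans[OF peval_Tsum_chain_constant[OF hom] peval_Tsum_chain_constant[OF hom, symmetric]])
  also have "\<dots> = peval x (peval (zero_vars_2_to n) ?G)"
    by (simp only: peval_peval)
  also have "\<dots> = peval x (foldr Tsum0 [1..<n] f)"
    by (simp only: peval_zero_vars_2_to_Tsum_chain[OF n assms])
  finally show "dsym n f x = peval x (foldr Tsum0 [1..<n] f)" .
qed

end
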